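(* Assume conditions (A), (C) and (D). Fix $T>0$, let $\delta_k>0$ with $\delta_k\to0$, and for each $k$ let $\tau_k$ be a stopping time (with respect to the filtration generated by $(Y_k(t))_{t\ge0}$) with $0\le\tau_k<\tau_k+\delta_k\le T$. Then there is a constant $K_3\ge0$ such that $\mathbf{E}[Y_k(\tau_k)]\le K_3$ and $\mathbf{E}[Y_k(\tau_k+\delta_k)]\le K_3$ for all $k\ge1$.
   Context: Model: for each $k\ge1$, let $\{\xi^{(k)}_{n,i}:n\ge0,i\ge1\}$ be i.i.d. $\mathbb{N}$-valued random variables with probability generating function $g_k$. For each $k$ and $n\ge0$ let $\{\psi^{(n)}_k(i):i\ge0\}$ be an $\mathbb{N}$-valued random function with $\psi^{(n)}_k(i)$ having probability generating function $h_k^{(i)}$; these random functions are i.i.d. in $n$ and independent of the offspring; $Z_k(0)$ is $\mathbb{N}$-valued and independent of everything else. $\phi_k^{(n)}(i)=i+\psi_k^{(n)}(i)$, $Z_k(n+1)=\sum_{i=1}^{\phi_k^{(n)}(Z_k(n))}\xi^{(k)}_{n,i}$. $\gamma_k$ positive constants increasing to $\infty$; $Y_k(t)=Z_k(\lfloor\gamma_kt\rfloor)/k$. Parameters: $b\in\mathbb{R}$, $c\ge0$, $m$ a measure on $(0,\infty)$ with $\int(z\wedge z^2)m(dz)<\infty$; $R(\lambda)=b\lambda+c\lambda^2+\int_0^\infty(e^{-\lambda z}-1+\lambda z)m(dz)$; $R_k(\lambda)=k\gamma_k[g_k(1-\lambda/k)-(1-\lambda/k)]$, $F_k(\lambda,x)=\gamma_k[h_k^{(\lfloor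 kx\rfloor)}(1-\lambda/k)-(1-\lambda/k)]$ for $0\le\lambda\le k$. Conditions: (A) $(R_k)$ is uniformly Lipschitz on each bounded interval and $R_k\to R$; (C) there is $K_1>0$ with $\frac{\gamma_k}{k}(h_k^{(\lfloor kx\rfloor)})'(1-)\le K_1(1+x)$ for all $x\ge0,k\ge1$; (D) $\sup_{k\ge1}\mathbf{E}[Y_k(0)]<\infty$. *)

theory Defs
  imports "HOL-Probability.Probability"
begin

definition has_pgf :: "'a measure \<Rightarrow> ('a \<Rightarrow> nat) \<Rightarrow> (real \<Rightarrow> real) \<Rightarrow> bool" where
  "has_pgf M X g \<longleftrightarrow> (\<forall>s\<in>{0..1}. g s = (\<integral>\<omega>. s ^ X \<omega> \<partial>M))"

text \<open>Index set of the basic random ingredients for a fixed k: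
  offspring variables xi_(n,i) (i >= 1), random immigration functions psi^(n), initial value.\<close>
datatype src = Off nat nat | Imm nat | Init

definition src_index :: "src set" where
  "src_index = {Off n i | n i. 1 \<le> i} \<union> range Imm \<union> {Init}"

text \<open>All ingredients viewed as random elements of nat => nat (product sigma-algebra);
  a nat-valued variable is embedded as a constant function (same generated sigma-algebra).\<close>
definition src_var :: "(nat \<Rightarrow> nat \<Rightarrow> 'a \<Rightarrow> nat) \<Rightarrow> (nat \<Rightarrow> nat \<Rightarrow> 'a \<Rightarrow> nat) \<Rightarrow> ('a \<Rightarrow> nat)
    \<Rightarrow> src \<Rightarrow> 'a \<Rightarrow> nat \<Rightarrow> nat" where
  "src_var \<xi> \<psi> Z0 j = (case j of
       Off n i \<Rightarrow> (\<lambda>\<omega> _. \<xi> n i \<omega>)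
     | Imm n \<Rightarrow> (\<lambda>\<omega> i. \<psi> n i \<omega>)
     | Init \<Rightarrow> (\<lambda>\<omega> _. Z0 \<omega>))"

abbreviation natfun_space :: "(nat \<Rightarrow> nat) measure" where
  "natfun_space \<equiv> PiM UNIV (\<lambda>_. count_space UNIV)"

primrec Zproc :: "(nat \<Rightarrow> nat \<Rightarrow> 'a \<Rightarrow> nat) \<Rightarrow> (nat \<Rightarrow> nat \<Rightarrow> 'a \<Rightarrow> nat) \<Rightarrow> ('a \<Rightarrow> nat)
    \<Rightarrow> nat \<Rightarrow> 'a \<Rightarrow> nat" where
  "Zproc \<xi> \<psi> Z0 0 \<omega> = Z0 \<omega>"
| "Zproc \<xi> \<psi> Z0 (Suc n) \<omega> =
     (\<Sum>i\<in>{1..Zproc \<xi> \<psi> Z0 n \<omega> + \<psi> n (Zproc \<xi> \<psi> Z0 n \<omega>) \<omega>}. \<xi> n i \<omega>)"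

definition Yproc :: "nat \<Rightarrow> real \<Rightarrow> (nat \<Rightarrow> 'a \<Rightarrow> nat) \<Rightarrow> real \<Rightarrow> 'a \<Rightarrow> real" where
  "Yproc k \<gamma> Z t \<omega> = real (Z (nat \<lfloor>\<gamma> * t\<rfloor>) \<omega>) / real k"

definition nat_filtration :: "'a measure \<Rightarrow> (real \<Rightarrow> 'a \<Rightarrow> real) \<Rightarrow> real \<Rightarrow> 'a measure" where
  "nat_filtration M Y t =
     sigma (space M) {Y s -` A \<inter> space M | s A. 0 \<le> s \<and> s \<le> t \<and> A \<in> sets borel}"

definition Rk :: "nat \<Rightarrow> real \<Rightarrow> (real \<Rightarrow> real) \<Rightarrow> real \<Rightarrow> real" where
  "Rk k \<gamma> g l = real k * \<gamma> * (g (1 - l / real k) - (1 - l / real k))"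

definition Rlim :: "real \<Rightarrow> real \<Rightarrow> real measure \<Rightarrow> real \<Rightarrow> real" where
  "Rlim b c m l = b * l + c * l^2 + (\<integral>z. exp (- l * z) - 1 + l * z \<partial>m)"

end

theory Submission
  imports Defs
begin

(* For every event A determined by the first n generations,
     E[1_A (Z(n+1) + k)] <= a * E[1_A (Z n + k)],   a = (1 + L/gamma_k) (1 + K1/gamma_k):
   given the past, the mean offspring number is at most 1 + L/gamma_k (R_k is L-Lipschitz and
   R_k(0) = 0), and the mean immigration from a population z is at most K1 (k + z)/gamma_k by (C).
   Hence a^(N - min S m) (Z (min S m) + k) has nonincreasing expectation in m, and optional stopping
   at S = floor (gamma_k (tau_k + c)) <= N = floor (gamma_k T) gives
     E[Z S] <= a^N k (C + 1) <= exp ((L + K1) T) k (C + 1),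
   i.e. E[Y_k(tau_k + c)] <= exp ((L + K1) T) (C + 1) for c = 0 and c = delta_k, uniformly in k. *)

lemma pgf_at_one: "prob_space M \<Longrightarrow> has_pgf M X g \<Longrightarrow> g 1 = 1"
  by (simp add: has_pgf_def prob_space.prob_space)

lemma truncated_power_le:
  fixes s :: real
  assumes "0 \<le> s" "s \<le> 1"
  shows "(1 - s) * s ^ J * real (min n J) \<le> 1 - s ^ n"
proof -
  have "s ^ J * real (min n J) = (\<Sum>j<min n J. s ^ J)" by simp
  also have "\<dots> \<le> (\<Sum>j<min n J. s ^ j)"
    by (rule sum_mono) (simp add: assms power_decreasing)
  also have "\<dots> \<le> (\<Sum>j<n. s ^ j)"
    by (rule sum_mono2) (auto simp: assms)
  finally have "(1 - s) * (s ^ J * real (min n J)) \<le> (1 - s) * (\<Sum>j<n. s ^ j)"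
    by (rule mult_left_mono) (use assms in auto)
  then show ?thesis by (simp add: one_diff_power_eq mult.assoc)
qed

lemma pgf_truncated_mean_le:
  assumes P: "prob_space M" and X: "X \<in> measurable M (count_space UNIV)"
    and pgf: "has_pgf M X g" and s: "0 \<le> s" "s \<le> 1"
  shows "(1 - s) * s ^ J * (\<integral>\<omega>. real (min (X \<omega>) J) \<partial>M) \<le> 1 - g s"
proof -
  interpret prob_space M by (rule P)
  have meas: "(\<lambda>\<omega>. f (X \<omega>)) \<in> borel_measurable M" for f :: "nat \<Rightarrow> real"
    using measurable_compose[OF X, of f borel] by (simp add: comp_def)
  have int_min: "integrable M (\<lambda>\<omega>. real (min (X \<omega>) J))"
    by (rule integrable_const_bound[where B="real J"]) (auto intro: meas)
  have int_pow: "integrable M (\<lambda>\<omega>. s ^ X \<omega>)"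
    by (rule integrable_const_bound[where B=1]) (use s in \<open>auto intro: meas power_le_one\<close>)
  have "(1 - s) * s ^ J * (\<integral>\<omega>. real (min (X \<omega>) J) \<partial>M)
      = (\<integral>\<omega>. (1 - s) * s ^ J * real (min (X \<omega>) J) \<partial>M)"
    by simp
  also have "\<dots> \<le> (\<integral>\<omega>. 1 - s ^ X \<omega> \<partial>M)"
    using s int_min int_pow by (intro integral_mono truncated_power_le) auto
  also have "\<dots> = 1 - g s"
    using pgf s int_pow by (simp add: has_pgf_def prob_space)
  finally show ?thesis .
qed

lemma truncated_mean_le_of_pgf:
  fixes X :: "'a \<Rightarrow> nat" and g :: "real \<Rightarrow> real"
  assumes P: "prob_space M" and X: "X \<in> measurable M (count_space UNIV)"
    and pgf: "has_pgf M X g"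
    and near_one: "\<And>e. 0 < e \<Longrightarrow> \<forall>\<^sub>F s in at_left 1. 1 - g s \<le> (B + e) * (1 - s)"
  shows "(\<integral>\<omega>. real (min (X \<omega>) J) \<partial>M) \<le> B"
proof (rule field_le_epsilon)
  fix e :: real assume "0 < e"
  define m where "m = (\<integral>\<omega>. real (min (X \<omega>) J) \<partial>M)"
  have "\<forall>\<^sub>F s in at_left 1. s ^ J * m \<le> B + e"
    using near_one[OF \<open>0 < e\<close>] eventually_at_left_real[OF zero_less_one]
  proof eventually_elim
    case (elim s)
    then have "(1 - s) * (s ^ J * m) \<le> (1 - s) * (B + e)"
      using pgf_truncated_mean_le[OF P X pgf, of s J] by (simp add: m_def algebra_simps)
    then show ?case using elim by simp
  qed
  moreover have "((\<lambda>s. s ^ J * m) \<longlongrightarrow> 1 ^ J * m) (at_left (1::real))"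
    by (intro tendsto_intros)
  ultimately show "m \<le> B + e"
    by (intro tendsto_upperbound) auto
qed

lemma nn_integral_le_of_pgf:
  fixes X :: "'a \<Rightarrow> nat" and g :: "real \<Rightarrow> real"
  assumes P: "prob_space M" and X: "X \<in> measurable M (count_space UNIV)"
    and pgf: "has_pgf M X g"
    and near_one: "\<And>e. 0 < e \<Longrightarrow> \<forall>\<^sub>F s in at_left 1. 1 - g s \<le> (B + e) * (1 - s)"
  shows "(\<integral>\<^sup>+\<omega>. of_nat (X \<omega>) \<partial>M) \<le> ennreal B"
proof -
  interpret prob_space M by (rule P)
  have meas: "(\<lambda>\<omega>. f (X \<omega>)) \<in> borel_measurable M" for f :: "nat \<Rightarrow> real"
    using measurable_compose[OF X, of f borel] by (simp add: comp_def)
  have int: "integrable M (\<lambda>\<omega>. real (min (X \<omega>) J))" for J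
    by (rule integrable_const_bound[where B="real J"]) (auto intro: meas)
  have "(\<integral>\<^sup>+\<omega>. of_nat (X \<omega>) \<partial>M) = (\<integral>\<^sup>+\<omega>. (SUP J. ennreal (real (min (X \<omega>) J))) \<partial>M)"
  proof (rule nn_integral_cong)
    fix \<omega>
    have "(SUP J. ennreal (real (min (X \<omega>) J))) = ennreal (real (X \<omega>))"
      by (intro antisym SUP_least SUP_upper2[of "X \<omega>"]) (auto simp: ennreal_leI)
    then show "of_nat (X \<omega>) = (SUP J. ennreal (real (min (X \<omega>) J)))"
      by (simp add: ennreal_of_nat_eq_real_of_nat)
  qed
  also have "\<dots> = (SUP J. \<integral>\<^sup>+\<omega>. ennreal (real (min (X \<omega>) J)) \<partial>M)"
    by (rule nn_integral_monotone_convergence_SUP)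
       (auto simp: incseq_def le_fun_def ennreal_leI intro: meas measurable_compose[OF meas])
  also have "\<dots> \<le> ennreal B"
  proof (rule SUP_least)
    fix J
    have "(\<integral>\<^sup>+\<omega>. ennreal (real (min (X \<omega>) J)) \<partial>M) = ennreal (\<integral>\<omega>. real (min (X \<omega>) J) \<partial>M)"
      by (rule nn_integral_eq_integral[OF int]) auto
    then show "(\<integral>\<^sup>+\<omega>. ennreal (real (min (X \<omega>) J)) \<partial>M) \<le> ennreal B"
      using truncated_mean_le_of_pgf[OF P X pgf near_one, of J] by (simp add: ennreal_leI)
  qed
  finally show ?thesis .
qed

lemma nn_integral_le_of_pgf_left_deriv:
  fixes X :: "'a \<Rightarrow> nat" and h :: "real \<Rightarrow> real"
  assumes P: "prob_space M" and X: "X \<in> measurable M (count_space UNIV)"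
    and pgf: "has_pgf M X h" and deriv: "(h has_real_derivative D) (at_left 1)"
  shows "(\<integral>\<^sup>+\<omega>. of_nat (X \<omega>) \<partial>M) \<le> ennreal D"
proof (rule nn_integral_le_of_pgf[OF P X pgf])
  fix e :: real assume "0 < e"
  have "((\<lambda>s. (h s - h 1) / (s - 1)) \<longlongrightarrow> D) (at_left 1)"
    using deriv unfolding has_field_derivative_iff .
  then have "\<forall>\<^sub>F s in at_left 1. (h s - h 1) / (s - 1) < D + e"
    using \<open>0 < e\<close> by (intro order_tendstoD(2)) auto
  then have "\<forall>\<^sub>F s in at_left 1. (1 - h s) / (1 - s) < D + e"
    by eventually_elim (metis pgf_at_one[OF P pgf] minus_diff_eq minus_divide_divide)
  then show "\<forall>\<^sub>F s in at_left 1. 1 - h s \<le> (D + e) * (1 - s)"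
    using eventually_at_left_real[OF zero_less_one]
    by eventually_elim (simp add: pos_divide_less_eq)
qed

lemma nn_integral_le_of_Rk_bound:
  fixes X :: "'a \<Rightarrow> nat" and g :: "real \<Rightarrow> real" and k :: nat
  assumes P: "prob_space M" and X: "X \<in> measurable M (count_space UNIV)"
    and pgf: "has_pgf M X g" and k: "1 \<le> k" and \<gamma>: "0 < \<gamma>"
    and lipschitz: "\<forall>x\<in>{0..min 1 (real k)}. \<forall>y\<in>{0..min 1 (real k)}.
      \<bar>Rk k \<gamma> g x - Rk k \<gamma> g y\<bar> \<le> L * \<bar>x - y\<bar>"
  shows "(\<integral>\<^sup>+\<omega>. of_nat (X \<omega>) \<partial>M) \<le> ennreal (1 + L / \<gamma>)"
proof (rule nn_integral_le_of_pgf[OF P X pgf])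
  fix e :: real assume "0 < e"
  have kpos: "0 < real k" using k by simp
  have "\<forall>\<^sub>F s in at_left 1. s \<in> {1 - 1 / real k<..<1}"
    using kpos by (intro eventually_at_left_real) simp
  then show "\<forall>\<^sub>F s in at_left 1. 1 - g s \<le> (1 + L / \<gamma> + e) * (1 - s)"
  proof eventually_elim
    case (elim s)
    define l where "l = real k * (1 - s)"
    have l: "0 \<le> l" "l \<le> 1"
      using elim kpos by (auto simp: l_def field_simps)
    have "1 - l / real k = s" using kpos by (simp add: l_def)
    then have "Rk k \<gamma> g l - Rk k \<gamma> g 0 = real k * \<gamma> * (g s - s)"
      by (simp add: Rk_def pgf_at_one[OF P pgf])
    then have "real k * (\<gamma> * (s - g s)) \<le> real k * (L * (1 - s))"
      using lipschitz[rule_format, of l 0] l k by (simp add: l_def algebra_simps abs_le_iff)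
    then have "\<gamma> * (s - g s) \<le> L * (1 - s)"
      using kpos by simp
    then have "s - g s \<le> L / \<gamma> * (1 - s)"
      using \<gamma> by (simp add: field_simps)
    moreover have "0 \<le> e * (1 - s)" using \<open>0 < e\<close> elim by simp
    ultimately show ?case by (simp add: algebra_simps)
  qed
qed

lemma nn_integral_le_of_pgf_deriv_bound:
  fixes X :: "'a \<Rightarrow> nat" and h :: "nat \<Rightarrow> real \<Rightarrow> real" and k z :: nat
  assumes P: "prob_space M" and X: "X \<in> measurable M (count_space UNIV)"
    and pgf: "has_pgf M X (h z)" and k: "1 \<le> k" and \<gamma>: "0 < \<gamma>" and K: "0 \<le> K"
    and deriv_bound: "\<forall>x\<ge>0. \<exists>D. (h (nat \<lfloor>real k * x\<rfloor>) has_real_derivative D) (at_left 1) \<and>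
              \<gamma> / real k * D \<le> K * (1 + x)"
  shows "(\<integral>\<^sup>+\<omega>. of_nat (X \<omega>) \<partial>M) \<le> ennreal (K / \<gamma>) * (ennreal (real k) + of_nat z)"
proof -
  have kpos: "0 < real k" using k by simp
  obtain D where D: "(h z has_real_derivative D) (at_left 1)" "\<gamma> / real k * D \<le> K * (1 + real z / real k)"
    using deriv_bound[rule_format, of "real z / real k"] kpos by auto
  have "\<gamma> * D \<le> K * (real k + real z)"
    using D(2) kpos by (simp add: field_simps)
  then have "D \<le> K / \<gamma> * (real k + real z)"
    using \<gamma> by (simp add: field_simps)
  then have "ennreal D \<le> ennreal (K / \<gamma> * (real k + real z))"
    by (rule ennreal_leI)
  also have "\<dots> = ennreal (K / \<gamma>) * ennreal (real k + real z)"
    by (rule ennreal_mult) (use K \<gamma> in auto)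
  also have "\<dots> = ennreal (K / \<gamma>) * (ennreal (real k) + of_nat z)"
    by (simp add: ennreal_plus ennreal_of_nat_eq_real_of_nat)
  finally show ?thesis
    using nn_integral_le_of_pgf_left_deriv[OF P X pgf D(1)] by simp
qed

lemma measurable_stopping_time_nat:
  fixes S :: "'a \<Rightarrow> nat"
  assumes "stopping_time F S" "\<And>n. sets (F n) \<subseteq> sets M" "\<And>n. space (F n) = space M"
  shows "S \<in> measurable M (count_space UNIV)"
  using measurable_stopping_time[OF assms]
  by (simp add: measurable_cong_sets[OF refl sets_borel_eq_count_space])

lemma nn_integral_add_cmult:
  fixes f g :: "'a \<Rightarrow> ennreal"
  assumes "f \<in> borel_measurable M" "g \<in> borel_measurable M"
  shows "(\<integral>\<^sup>+\<omega>. f \<omega> + c * g \<omega> \<partial>M) = (\<integral>\<^sup>+\<omega>. f \<omega> \<partial>M) + c * (\<integral>\<^sup>+\<omega>. g \<omega> \<partial>M)"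
  using assms by (simp add: nn_integral_add nn_integral_cmult)

(* Under the growth bound below its integral is nonincreasing in m; at m = N it dominates
   X (S w) w, at m = 0 it is a^N X 0 w. *)
definition weighted_stopped :: "ennreal \<Rightarrow> nat \<Rightarrow> ('a \<Rightarrow> nat) \<Rightarrow> (nat \<Rightarrow> 'a \<Rightarrow> ennreal) \<Rightarrow> nat \<Rightarrow> 'a \<Rightarrow> ennreal"
  where "weighted_stopped a N S X m \<omega> = a ^ (N - min (S \<omega>) m) * X (min (S \<omega>) m) \<omega>"

lemma borel_measurable_weighted_stopped:
  assumes "S \<in> measurable M (count_space UNIV)" "\<And>n. X n \<in> borel_measurable M"
  shows "weighted_stopped a N S X m \<in> borel_measurable M"
proof -
  have "(\<lambda>\<omega>. (\<lambda>j \<omega>. a ^ (N - min j m) * X (min j m) \<omega>) (S \<omega>) \<omega>) \<in> borel_measurable M"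
    by (rule measurable_compose_countable[OF _ assms(1)]) (use assms(2) in measurable)
  then show ?thesis by (simp add: weighted_stopped_def[abs_def])
qed

lemma nn_integral_weighted_stopped_Suc_le:
  fixes X :: "nat \<Rightarrow> 'a \<Rightarrow> ennreal" and F :: "nat \<Rightarrow> 'a measure" and S :: "'a \<Rightarrow> nat"
  assumes X: "\<And>n. X n \<in> borel_measurable M"
    and sets_F: "\<And>n. sets (F n) \<subseteq> sets M" and space_F: "\<And>n. space (F n) = space M"
    and growth: "\<And>n A. A \<in> sets (F n) \<Longrightarrow>
      (\<integral>\<^sup>+\<omega>. indicator A \<omega> * X (Suc n) \<omega> \<partial>M) \<le> a * (\<integral>\<^sup>+\<omega>. indicator A \<omega> * X n \<omega> \<partial>M)"
    and S: "stopping_time F S" and S_le: "\<And>\<omega>. \<omega> \<in> space M \<Longrightarrow> S \<omega> \<le> N"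
  shows "(\<integral>\<^sup>+\<omega>. weighted_stopped a N S X (Suc m) \<omega> \<partial>M) \<le> (\<integral>\<^sup>+\<omega>. weighted_stopped a N S X m \<omega> \<partial>M)"
proof -
  let ?U = "weighted_stopped a N S X"
  define A where "A = {\<omega>\<in>space M. m < S \<omega>}"
  define B where "B = {\<omega>\<in>space M. S \<omega> \<le> m}"
  define c where "c = a ^ (N - Suc m)"
  have S_meas: "S \<in> measurable M (count_space UNIV)"
    by (rule measurable_stopping_time_nat[OF S sets_F space_F])
  have A_F: "A \<in> sets (F m)"
    using stopping_timeD2[OF S, of m] space_F by (simp add: A_def pred_def)
  have [measurable]: "A \<in> sets M" "B \<in> sets M"
    using A_F sets_F S_meas by (auto simp: A_def B_def)
  note [measurable] = borel_measurable_weighted_stopped[OF S_meas X] X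
  have U_Suc: "?U (Suc m) \<omega> = indicator B \<omega> * ?U m \<omega> + c * (indicator A \<omega> * X (Suc m) \<omega>)"
    and U_m: "?U m \<omega> = indicator B \<omega> * ?U m \<omega> + c * a * (indicator A \<omega> * X m \<omega>)"
    if "\<omega> \<in> space M" for \<omega>
  proof -
    show "?U (Suc m) \<omega> = indicator B \<omega> * ?U m \<omega> + c * (indicator A \<omega> * X (Suc m) \<omega>)"
      using that by (cases "S \<omega> \<le> m") (auto simp: weighted_stopped_def A_def B_def c_def min_def le_Suc_eq)
    have "N - m = Suc (N - Suc m)" if "m < S \<omega>"
      using that S_le[OF \<open>\<omega> \<in> space M\<close>] by simp
    then show "?U m \<omega> = indicator B \<omega> * ?U m \<omega> + c * a * (indicator A \<omega> * X m \<omega>)"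
      using that by (cases "S \<omega> \<le> m") (auto simp: weighted_stopped_def A_def B_def c_def min_def mult.commute)
  qed
  have "(\<integral>\<^sup>+\<omega>. ?U (Suc m) \<omega> \<partial>M)
      = (\<integral>\<^sup>+\<omega>. indicator B \<omega> * ?U m \<omega> \<partial>M) + c * (\<integral>\<^sup>+\<omega>. indicator A \<omega> * X (Suc m) \<omega> \<partial>M)"
    by (subst nn_integral_cong[OF U_Suc]) (simp_all add: nn_integral_add_cmult)
  also have "\<dots> \<le> (\<integral>\<^sup>+\<omega>. indicator B \<omega> * ?U m \<omega> \<partial>M) + c * a * (\<integral>\<^sup>+\<omega>. indicator A \<omega> * X m \<omega> \<partial>M)"
    using growth[OF A_F] by (simp add: add_left_mono mult_left_mono mult.assoc)
  also have "\<dots> = (\<integral>\<^sup>+\<omega>. indicator B \<omega> * ?U m \<omega> + c * a * (indicator A \<omega> * X m \<omega>) \<partial>M)"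
    by (simp add: nn_integral_add_cmult)
  also have "\<dots> = (\<integral>\<^sup>+\<omega>. ?U m \<omega> \<partial>M)"
    by (rule nn_integral_cong) (rule U_m[symmetric])
  finally show ?thesis .
qed

lemma nn_integral_stopped_le_power:
  fixes X :: "nat \<Rightarrow> 'a \<Rightarrow> ennreal" and F :: "nat \<Rightarrow> 'a measure"
    and S :: "'a \<Rightarrow> nat" and a :: ennreal
  assumes X: "\<And>n. X n \<in> borel_measurable M"
    and sets_F: "\<And>n. sets (F n) \<subseteq> sets M" and space_F: "\<And>n. space (F n) = space M"
    and growth: "\<And>n A. A \<in> sets (F n) \<Longrightarrow>
      (\<integral>\<^sup>+\<omega>. indicator A \<omega> * X (Suc n) \<omega> \<partial>M) \<le> a * (\<integral>\<^sup>+\<omega>. indicator A \<omega> * X n \<omega> \<partial>M)"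
    and S: "stopping_time F S" and S_le: "\<And>\<omega>. \<omega> \<in> space M \<Longrightarrow> S \<omega> \<le> N"
    and a: "1 \<le> a"
  shows "(\<integral>\<^sup>+\<omega>. X (S \<omega>) \<omega> \<partial>M) \<le> a ^ N * (\<integral>\<^sup>+\<omega>. X 0 \<omega> \<partial>M)"
proof -
  let ?U = "weighted_stopped a N S X"
  have "(\<integral>\<^sup>+\<omega>. X (S \<omega>) \<omega> \<partial>M) \<le> (\<integral>\<^sup>+\<omega>. ?U N \<omega> \<partial>M)"
  proof (rule nn_integral_mono)
    fix \<omega> assume "\<omega> \<in> space M"
    then have "min (S \<omega>) N = S \<omega>" using S_le by simp
    moreover have "1 \<le> a ^ (N - S \<omega>)" using a by (rule one_le_power)
    ultimately show "X (S \<omega>) \<omega> \<le> ?U N \<omega>"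
      unfolding weighted_stopped_def using mult_right_mono[of 1 "a ^ (N - S \<omega>)" "X (S \<omega>) \<omega>"] by simp
  qed
  also have "(\<integral>\<^sup>+\<omega>. ?U n \<omega> \<partial>M) \<le> (\<integral>\<^sup>+\<omega>. ?U 0 \<omega> \<partial>M)" for n
    using nn_integral_weighted_stopped_Suc_le[where F=F and S=S and X=X and M=M and a=a and N=N,
        OF X sets_F space_F growth S S_le]
    by (induction n) (auto intro: order_trans)
  also have "\<dots> = a ^ N * (\<integral>\<^sup>+\<omega>. X 0 \<omega> \<partial>M)"
    unfolding weighted_stopped_def using X by (simp add: nn_integral_cmult)
  finally show ?thesis .
qed

lemma nat_floor_le_iff_ex_le:
  fixes \<gamma> x :: real
  assumes "0 < \<gamma>"
  shows "nat \<lfloor>\<gamma> * x\<rfloor> \<le> n \<longleftrightarrow> (\<exists>j. x \<le> (real n + 1 - 1 / real (Suc j)) / \<gamma>)"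
proof -
  have "nat \<lfloor>\<gamma> * x\<rfloor> \<le> n \<longleftrightarrow> \<gamma> * x < real n + 1"
    by linarith
  also have "\<dots> \<longleftrightarrow> (\<exists>j. \<gamma> * x \<le> real n + 1 - 1 / real (Suc j))"
  proof
    assume "\<gamma> * x < real n + 1"
    then obtain j where "inverse (real (Suc j)) < real n + 1 - \<gamma> * x"
      using reals_Archimedean[of "real n + 1 - \<gamma> * x"] by auto
    then show "\<exists>j. \<gamma> * x \<le> real n + 1 - 1 / real (Suc j)"
      by (auto simp: inverse_eq_divide intro!: exI[of _ j])
  next
    assume "\<exists>j. \<gamma> * x \<le> real n + 1 - 1 / real (Suc j)"
    then obtain j where "\<gamma> * x \<le> real n + 1 - 1 / real (Suc j)" ..
    moreover have "0 < 1 / real (Suc j)" by simp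
    ultimately show "\<gamma> * x < real n + 1" by linarith
  qed
  also have "\<dots> \<longleftrightarrow> (\<exists>j. x \<le> (real n + 1 - 1 / real (Suc j)) / \<gamma>)"
    using assms by (simp add: pos_le_divide_eq mult.commute)
  finally show ?thesis .
qed

lemma growth_factor_power_le_exp:
  fixes \<gamma> L K T :: real
  assumes \<gamma>: "0 < \<gamma>" and L: "0 \<le> L" and K: "0 \<le> K" and T: "0 \<le> T"
  shows "((1 + L / \<gamma>) * (1 + K / \<gamma>)) ^ nat \<lfloor>\<gamma> * T\<rfloor> \<le> exp ((L + K) * T)"
proof -
  let ?N = "nat \<lfloor>\<gamma> * T\<rfloor>"
  have "(1 + L / \<gamma>) * (1 + K / \<gamma>) \<le> exp (L / \<gamma>) * exp (K / \<gamma>)"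
    using \<gamma> L K by (intro mult_mono) auto
  also have "\<dots> = exp ((L + K) / \<gamma>)"
    by (simp add: exp_add[symmetric] add_divide_distrib)
  finally have "((1 + L / \<gamma>) * (1 + K / \<gamma>)) ^ ?N \<le> exp ((L + K) / \<gamma>) ^ ?N"
    using \<gamma> L K by (intro power_mono) auto
  also have "\<dots> = exp (real ?N * ((L + K) / \<gamma>))"
    by (rule exp_of_nat_mult[symmetric])
  also have "\<dots> \<le> exp ((\<gamma> * T) * ((L + K) / \<gamma>))"
    using \<gamma> T L K by (intro exp_mono mult_right_mono) auto
  also have "\<dots> = exp ((L + K) * T)"
    using \<gamma> by simp
  finally show ?thesis .
qed

lemma suminf_of_bool_atLeastAtMost:
  fixes f :: "nat \<Rightarrow> ennreal"
  shows "(\<Sum>i. of_bool (i \<in> {a..b}) * f i) = (\<Sum>i\<in>{a..b}. f i)"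
  by (subst suminf_finite[of "{a..b}"]) auto

lemma nn_integral_random_sum_le:
  fixes W :: "'a \<Rightarrow> nat" and Y :: "nat \<Rightarrow> 'a \<Rightarrow> ennreal" and I :: "'a \<Rightarrow> ennreal"
  assumes [measurable]: "W \<in> measurable M (count_space UNIV)" "I \<in> borel_measurable M"
    and Y: "\<And>i. 1 \<le> i \<Longrightarrow> Y i \<in> borel_measurable M"
    and indep: "\<And>i. 1 \<le> i \<Longrightarrow>
      (\<integral>\<^sup>+\<omega>. I \<omega> * of_bool (i \<le> W \<omega>) * Y i \<omega> \<partial>M) = (\<integral>\<^sup>+\<omega>. I \<omega> * of_bool (i \<le> W \<omega>) \<partial>M) * (\<integral>\<^sup>+\<omega>. Y i \<omega> \<partial>M)"
    and mean: "\<And>i. 1 \<le> i \<Longrightarrow> (\<integral>\<^sup>+\<omega>. Y i \<omega> \<partial>M) \<le> m"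
  shows "(\<integral>\<^sup>+\<omega>. I \<omega> * (\<Sum>i\<in>{1..W \<omega>}. Y i \<omega>) \<partial>M) \<le> m * (\<integral>\<^sup>+\<omega>. I \<omega> * of_nat (W \<omega>) \<partial>M)"
proof -
  define G where "G i \<omega> = I \<omega> * of_bool (i \<in> {1..W \<omega>})" for i \<omega>
  have G_meas [measurable]: "G i \<in> borel_measurable M" for i
    unfolding G_def by measurable
  have "(\<integral>\<^sup>+\<omega>. I \<omega> * (\<Sum>i\<in>{1..W \<omega>}. Y i \<omega>) \<partial>M) = (\<integral>\<^sup>+\<omega>. (\<Sum>i. G i \<omega> * Y i \<omega>) \<partial>M)"
    by (simp only: G_def mult.assoc ennreal_suminf_cmult suminf_of_bool_atLeastAtMost)
  also have "\<dots> = (\<Sum>i. \<integral>\<^sup>+\<omega>. G i \<omega> * Y i \<omega> \<partial>M)"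
  proof (rule nn_integral_suminf)
    show "(\<lambda>\<omega>. G i \<omega> * Y i \<omega>) \<in> borel_measurable M" for i
      using Y[of i] by (cases "i = 0") (auto simp: G_def)
  qed
  also have "\<dots> \<le> (\<Sum>i. m * (\<integral>\<^sup>+\<omega>. G i \<omega> \<partial>M))"
  proof (intro suminf_le)
    show "(\<integral>\<^sup>+\<omega>. G i \<omega> * Y i \<omega> \<partial>M) \<le> m * (\<integral>\<^sup>+\<omega>. G i \<omega> \<partial>M)" for i
      using indep[of i] mean[of i] by (cases "i = 0") (auto simp: G_def mult.commute mult_right_mono)
  qed auto
  also have "\<dots> = m * (\<integral>\<^sup>+\<omega>. (\<Sum>i. G i \<omega>) \<partial>M)"
    by (simp add: nn_integral_suminf)
  also have "(\<integral>\<^sup>+\<omega>. (\<Sum>i. G i \<omega>) \<partial>M) = (\<integral>\<^sup>+\<omega>. I \<omega> * of_nat (W \<omega>) \<partial>M)"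
    using suminf_of_bool_atLeastAtMost[where f="\<lambda>_. 1"]
    by (simp only: G_def ennreal_suminf_cmult mult_1_right, simp)
  finally show ?thesis .
qed

lemma nn_integral_split_nat_value:
  fixes W :: "'a \<Rightarrow> nat" and f :: "nat \<Rightarrow> 'a \<Rightarrow> ennreal"
  assumes [measurable]: "W \<in> measurable M (count_space UNIV)" "\<And>z. f z \<in> borel_measurable M"
  shows "(\<integral>\<^sup>+\<omega>. f (W \<omega>) \<omega> \<partial>M) = (\<Sum>z. \<integral>\<^sup>+\<omega>. of_bool (W \<omega> = z) * f z \<omega> \<partial>M)"
proof -
  have "(\<integral>\<^sup>+\<omega>. f (W \<omega>) \<omega> \<partial>M) = (\<integral>\<^sup>+\<omega>. (\<Sum>z. of_bool (W \<omega> = z) * f z \<omega>) \<partial>M)"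
    by (intro nn_integral_cong) (subst suminf_finite[of "{W _}"], auto)
  also have "\<dots> = (\<Sum>z. \<integral>\<^sup>+\<omega>. of_bool (W \<omega> = z) * f z \<omega> \<partial>M)"
    by (rule nn_integral_suminf) measurable
  finally show ?thesis .
qed

lemma measurable_add_nat:
  fixes f g :: "'a \<Rightarrow> nat"
  shows "f \<in> measurable M (count_space UNIV) \<Longrightarrow> g \<in> measurable M (count_space UNIV) \<Longrightarrow>
    (\<lambda>x. f x + g x) \<in> measurable M (count_space UNIV)"
  by measurable

definition past :: "nat \<Rightarrow> src set" where
  "past n = {Init} \<union> {Off j i |j i. j < n \<and> 1 \<le> i} \<union> {Imm j |j. j < n}"

abbreviation past_space :: "nat \<Rightarrow> (src \<Rightarrow> nat \<Rightarrow> nat) measure" where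
  "past_space n \<equiv> PiM (past n) (\<lambda>_. natfun_space)"

definition Zproc_src :: "nat \<Rightarrow> (src \<Rightarrow> nat \<Rightarrow> nat) \<Rightarrow> nat" where
  "Zproc_src n x = Zproc (\<lambda>j i x. x (Off j i) 0) (\<lambda>j i x. x (Imm j) i) (\<lambda>x. x Init 0) n x"

definition src_family :: "(nat \<Rightarrow> nat \<Rightarrow> 'a \<Rightarrow> nat) \<Rightarrow> (nat \<Rightarrow> nat \<Rightarrow> 'a \<Rightarrow> nat) \<Rightarrow> ('a \<Rightarrow> nat)
    \<Rightarrow> src set \<Rightarrow> 'a \<Rightarrow> src \<Rightarrow> nat \<Rightarrow> nat" where
  "src_family \<xi> \<psi> Z0 K \<omega> = restrict (\<lambda>j. src_var \<xi> \<psi> Z0 j \<omega>) K"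

lemma Zproc_src_0: "Zproc_src 0 x = x Init 0"
  by (simp add: Zproc_src_def)

lemma Zproc_src_Suc:
  "Zproc_src (Suc n) x = (\<Sum>i\<in>{1..Zproc_src n x + x (Imm n) (Zproc_src n x)}. x (Off n i) 0)"
  by (simp add: Zproc_src_def)

lemma past_mono: "m \<le> n \<Longrightarrow> past m \<subseteq> past n"
  by (auto simp: past_def)

lemma past_subset_src_index: "past n \<subseteq> src_index"
  by (auto simp: past_def src_index_def)

lemma measurable_src_component:
  assumes "j \<in> K"
  shows "(\<lambda>x. x j i) \<in> measurable (PiM K (\<lambda>_. natfun_space)) (count_space UNIV)"
proof -
  have "(\<lambda>f. f i) \<circ> (\<lambda>x. x j) \<in> measurable (PiM K (\<lambda>_. natfun_space)) (count_space UNIV)"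
    by (rule measurable_comp[OF measurable_component_singleton[OF assms]])
       (rule measurable_component_singleton, simp)
  then show ?thesis by (simp add: comp_def)
qed

lemma measurable_Zproc_src_plus_immigration:
  assumes Z: "Zproc_src n \<in> measurable (PiM K (\<lambda>_. natfun_space)) (count_space UNIV)" and "Imm n \<in> K"
  shows "(\<lambda>x. Zproc_src n x + x (Imm n) (Zproc_src n x)) \<in> measurable (PiM K (\<lambda>_. natfun_space)) (count_space UNIV)"
proof -
  have "(\<lambda>x. x (Imm n) (Zproc_src n x)) \<in> measurable (PiM K (\<lambda>_. natfun_space)) (count_space UNIV)"
    by (rule measurable_compose_countable[OF measurable_src_component[OF \<open>Imm n \<in> K\<close>] Z])
  then show ?thesis by (rule measurable_add_nat[OF Z])
qed

lemma measurable_Zproc_src: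
  "past n \<subseteq> K \<Longrightarrow> Zproc_src n \<in> measurable (PiM K (\<lambda>_. natfun_space)) (count_space UNIV)"
proof (induction n)
  case 0
  then show ?case
    using measurable_src_component[of Init K 0] by (simp add: Zproc_src_0[abs_def] past_def)
next
  case (Suc n)
  have past_Suc: "past n \<subseteq> K" "Imm n \<in> K" "\<And>i. 1 \<le> i \<Longrightarrow> Off n i \<in> K"
    using Suc.prems past_mono[of n "Suc n"] by (auto simp: past_def)
  have bound: "(\<lambda>x. Zproc_src n x + x (Imm n) (Zproc_src n x))
      \<in> measurable (PiM K (\<lambda>_. natfun_space)) (count_space UNIV)"
    by (rule measurable_Zproc_src_plus_immigration[OF Suc.IH]) fact+
  have "(\<lambda>x. x (Off n i) 0) \<in> measurable (PiM K (\<lambda>_. natfun_space)) (count_space UNIV)"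
    if "i \<in> {1..N}" for i N
    using that by (intro measurable_src_component past_Suc(3)) simp
  note [measurable] = this
  have "(\<lambda>x. \<Sum>i\<in>{1..N}. x (Off n i) 0) \<in> measurable (PiM K (\<lambda>_. natfun_space)) (count_space UNIV)" for N
    by measurable
  from measurable_compose_countable[OF this bound]
  show ?case
    by (simp add: Zproc_src_Suc[abs_def])
qed

lemma Zproc_eq_Zproc_src:
  "past n \<subseteq> K \<Longrightarrow> Zproc \<xi> \<psi> Z0 n \<omega> = Zproc_src n (src_family \<xi> \<psi> Z0 K \<omega>)"
proof (induction n)
  case 0
  then show ?case by (simp add: Zproc_src_0 src_family_def src_var_def past_def)
next
  case (Suc n)
  have "past n \<subseteq> K" "Imm n \<in> K" "\<And>i. 1 \<le> i \<Longrightarrow> Off n i \<in> K"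
    using Suc.prems past_mono[of n "Suc n"] by (auto simp: past_def)
  then show ?case
    using Suc.IH
    by (auto simp: Zproc_src_Suc src_family_def src_var_def intro!: sum.cong)
qed

locale branching_immigration = prob_space M for M :: "'a measure" +
  fixes \<xi> \<psi> :: "nat \<Rightarrow> nat \<Rightarrow> 'a \<Rightarrow> nat" and Z0 :: "'a \<Rightarrow> nat"
  assumes indep_src: "indep_vars (\<lambda>_. natfun_space) (src_var \<xi> \<psi> Z0) src_index"
begin

abbreviation "V \<equiv> src_family \<xi> \<psi> Z0"
abbreviation "Z \<equiv> Zproc \<xi> \<psi> Z0"

lemma measurable_src_var: "j \<in> src_index \<Longrightarrow> src_var \<xi> \<psi> Z0 j \<in> measurable M natfun_space"
  using indep_src by (auto simp: indep_vars_def)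

lemma measurable_src_family: "K \<subseteq> src_index \<Longrightarrow> V K \<in> measurable M (PiM K (\<lambda>_. natfun_space))"
  unfolding src_family_def by (rule measurable_restrict) (auto intro: measurable_src_var)

lemma borel_measurable_src_family:
  "K \<subseteq> src_index \<Longrightarrow> F \<in> borel_measurable (PiM K (\<lambda>_. natfun_space)) \<Longrightarrow>
    (\<lambda>\<omega>. F (V K \<omega>)) \<in> borel_measurable M"
  using measurable_compose[OF measurable_src_family] .

lemma measurable_Z: "Z n \<in> measurable M (count_space UNIV)"
proof -
  have "Zproc_src n \<circ> V (past n) \<in> measurable M (count_space UNIV)"
    by (rule measurable_comp[OF measurable_src_family[OF past_subset_src_index] measurable_Zproc_src]) simp
  moreover have "Zproc_src n \<circ> V (past n) = Z n"
    by (simp add: fun_eq_iff Zproc_eq_Zproc_src[OF order_refl])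
  ultimately show ?thesis by simp
qed

lemma measurable_\<psi>: "\<psi> n z \<in> measurable M (count_space UNIV)"
proof -
  have "Imm n \<in> src_index" by (simp add: src_index_def)
  from measurable_compose[OF measurable_src_var[OF this] measurable_component_singleton[of z UNIV]]
  show ?thesis by (simp add: src_var_def)
qed

lemma measurable_\<xi>: "1 \<le> i \<Longrightarrow> \<xi> n i \<in> measurable M (count_space UNIV)"
proof -
  assume "1 \<le> i"
  then have "Off n i \<in> src_index" by (simp add: src_index_def)
  from measurable_compose[OF measurable_src_var[OF this] measurable_component_singleton[of 0 UNIV]]
  show ?thesis by (simp add: src_var_def)
qed

lemma nn_integral_src_family_mult:
  assumes K: "K \<subseteq> src_index" and J: "J \<subseteq> src_index" "K \<inter> J = {}"
    and F: "F \<in> borel_measurable (PiM K (\<lambda>_. natfun_space))"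
    and G: "G \<in> borel_measurable (PiM J (\<lambda>_. natfun_space))"
  shows "(\<integral>\<^sup>+\<omega>. F (V K \<omega>) * G (V J \<omega>) \<partial>M) = (\<integral>\<^sup>+\<omega>. F (V K \<omega>) \<partial>M) * (\<integral>\<^sup>+\<omega>. G (V J \<omega>) \<partial>M)"
proof -
  define KJ where "KJ b = (if b then K else J)" for b :: bool
  define FG where "FG b = (if b then F else G)" for b
  have "indep_vars (\<lambda>b. PiM (KJ b) (\<lambda>_. natfun_space)) (\<lambda>b. V (KJ b)) UNIV"
    unfolding src_family_def using K J
    by (intro indep_vars_restrict[OF indep_src]) (auto simp: KJ_def disjoint_family_on_def)
  then have "indep_vars (\<lambda>_. borel) (\<lambda>b \<omega>. FG b (V (KJ b) \<omega>)) UNIV"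
    by (rule indep_vars_compose2) (use F G in \<open>auto simp: FG_def KJ_def\<close>)
  then have "(\<integral>\<^sup>+\<omega>. (\<Prod>b\<in>UNIV. FG b (V (KJ b) \<omega>)) \<partial>M) = (\<Prod>b\<in>UNIV. \<integral>\<^sup>+\<omega>. FG b (V (KJ b) \<omega>) \<partial>M)"
    by (rule indep_vars_nn_integral[rotated]) auto
  then show ?thesis
    by (simp add: UNIV_bool FG_def KJ_def mult.commute)
qed

(* Split according to the value z of Z n, which is determined by past n and hence independent of psi n z. *)
lemma nn_integral_immigration_le:
  fixes c \<kappa> :: ennreal
  assumes B: "B \<in> sets (past_space n)"
    and mean: "\<And>z. (\<integral>\<^sup>+\<omega>. of_nat (\<psi> n z \<omega>) \<partial>M) \<le> c * (\<kappa> + of_nat z)"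
  shows "(\<integral>\<^sup>+\<omega>. indicator B (V (past n) \<omega>) * of_nat (\<psi> n (Z n \<omega>) \<omega>) \<partial>M)
      \<le> (\<integral>\<^sup>+\<omega>. indicator B (V (past n) \<omega>) * (c * (\<kappa> + of_nat (Z n \<omega>))) \<partial>M)"
proof -
  let ?I = "\<lambda>\<omega>. indicator B (V (past n) \<omega>) :: ennreal"
  define H where "H z x = (indicator B x * of_bool (Zproc_src n x = z) :: ennreal)" for z x
  have H_meas: "H z \<in> borel_measurable (past_space n)" for z
    using measurable_Zproc_src[OF order_refl] B unfolding H_def by measurable
  have H_V: "H z (V (past n) \<omega>) = of_bool (Z n \<omega> = z) * ?I \<omega>" for z \<omega>
    by (simp add: H_def Zproc_eq_Zproc_src[OF order_refl] mult.commute)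
  have past: "past n \<subseteq> src_index" "{Imm n} \<subseteq> src_index" "past n \<inter> {Imm n} = {}"
    using past_subset_src_index by (auto simp: past_def src_index_def)
  have indep: "(\<integral>\<^sup>+\<omega>. H z (V (past n) \<omega>) * of_nat (\<psi> n z \<omega>) \<partial>M)
      = (\<integral>\<^sup>+\<omega>. H z (V (past n) \<omega>) \<partial>M) * (\<integral>\<^sup>+\<omega>. of_nat (\<psi> n z \<omega>) \<partial>M)" for z
    using nn_integral_src_family_mult[OF past H_meas, of "\<lambda>x. of_nat (x (Imm n) z)"]
      measurable_src_component[of "Imm n" "{Imm n}" z]
    by (simp add: src_family_def src_var_def)
  have I_meas: "?I \<in> borel_measurable M"
    using borel_measurable_src_family[OF past(1)] B by measurable
  note [measurable] = I_meas measurable_Z measurable_\<psi>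
  have "(\<integral>\<^sup>+\<omega>. ?I \<omega> * of_nat (\<psi> n (Z n \<omega>) \<omega>) \<partial>M)
      = (\<Sum>z. \<integral>\<^sup>+\<omega>. H z (V (past n) \<omega>) * of_nat (\<psi> n z \<omega>) \<partial>M)"
    by (subst nn_integral_split_nat_value[where W="Z n"]) (simp_all add: H_V mult.assoc)
  also have "\<dots> \<le> (\<Sum>z. (\<integral>\<^sup>+\<omega>. H z (V (past n) \<omega>) \<partial>M) * (c * (\<kappa> + of_nat z)))"
    unfolding indep by (intro suminf_le mult_left_mono mean) auto
  also have "\<dots> = (\<Sum>z. \<integral>\<^sup>+\<omega>. H z (V (past n) \<omega>) * (c * (\<kappa> + of_nat z)) \<partial>M)"
    using borel_measurable_src_family[OF past(1) H_meas] by (simp add: nn_integral_multc)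
  also have "\<dots> = (\<integral>\<^sup>+\<omega>. ?I \<omega> * (c * (\<kappa> + of_nat (Z n \<omega>))) \<partial>M)"
    by (subst nn_integral_split_nat_value[where W="Z n"]) (simp_all add: H_V mult.assoc)
  finally show ?thesis .
qed


(* The event is determined by the ingredients in insert (Imm n) (past n), which exclude Off n i. *)
lemma nn_integral_offspring_indep:
  assumes B: "B \<in> sets (past_space n)" and i: "1 \<le> i"
  defines "I \<equiv> \<lambda>\<omega>. indicator B (V (past n) \<omega>) * of_bool (i \<le> Z n \<omega> + \<psi> n (Z n \<omega>) \<omega>) :: ennreal"
  shows "(\<integral>\<^sup>+\<omega>. I \<omega> * of_nat (\<xi> n i \<omega>) \<partial>M) = (\<integral>\<^sup>+\<omega>. I \<omega> \<partial>M) * (\<integral>\<^sup>+\<omega>. of_nat (\<xi> n i \<omega>) \<partial>M)"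
proof -
  let ?Q = "insert (Imm n) (past n)"
  define W where "W x = Zproc_src n x + x (Imm n) (Zproc_src n x)" for x :: "src \<Rightarrow> nat \<Rightarrow> nat"
  define F where "F x = (indicator B (restrict x (past n)) * of_bool (i \<le> W x) :: ennreal)" for x
  have Q: "?Q \<subseteq> src_index" "{Off n i} \<subseteq> src_index" "?Q \<inter> {Off n i} = {}"
    using past_subset_src_index i by (auto simp: src_index_def past_def)
  have "W \<in> measurable (PiM ?Q (\<lambda>_. natfun_space)) (count_space UNIV)"
    unfolding W_def by (intro measurable_Zproc_src_plus_immigration measurable_Zproc_src) auto
  then have "(\<lambda>x. of_bool (i \<le> W x) :: ennreal) \<in> borel_measurable (PiM ?Q (\<lambda>_. natfun_space))"
    by measurable
  moreover have "(\<lambda>x. indicator B (restrict x (past n)) :: ennreal) \<in> borel_measurable (PiM ?Q (\<lambda>_. natfun_space))"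
    using measurable_compose[OF measurable_restrict_subset borel_measurable_indicator[OF B], of ?Q] by auto
  ultimately have "F \<in> borel_measurable (PiM ?Q (\<lambda>_. natfun_space))"
    unfolding F_def by (rule borel_measurable_times_ennreal[rotated])
  moreover have "(\<lambda>x. of_nat (x (Off n i) 0) :: ennreal) \<in> borel_measurable (PiM {Off n i} (\<lambda>_. natfun_space))"
    using measurable_src_component[of "Off n i" "{Off n i}" 0] by measurable
  ultimately have "(\<integral>\<^sup>+\<omega>. F (V ?Q \<omega>) * of_nat (V {Off n i} \<omega> (Off n i) 0) \<partial>M)
      = (\<integral>\<^sup>+\<omega>. F (V ?Q \<omega>) \<partial>M) * (\<integral>\<^sup>+\<omega>. of_nat (V {Off n i} \<omega> (Off n i) 0) \<partial>M)"
    by (intro nn_integral_src_family_mult Q)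
  moreover have "F (V ?Q \<omega>) = I \<omega>" for \<omega>
  proof -
    have "Z n \<omega> = Zproc_src n (V ?Q \<omega>)"
      by (rule Zproc_eq_Zproc_src) auto
    then have "W (V ?Q \<omega>) = Z n \<omega> + \<psi> n (Z n \<omega>) \<omega>"
      by (simp add: W_def src_family_def src_var_def)
    moreover have "restrict (V ?Q \<omega>) (past n) = V (past n) \<omega>"
      by (auto simp: src_family_def fun_eq_iff)
    ultimately show ?thesis by (simp add: F_def I_def)
  qed
  ultimately show ?thesis
    by (simp add: src_family_def src_var_def)
qed

lemma nn_integral_offspring_le:
  fixes m :: ennreal
  assumes B: "B \<in> sets (past_space n)"
    and mean: "\<And>i. 1 \<le> i \<Longrightarrow> (\<integral>\<^sup>+\<omega>. of_nat (\<xi> n i \<omega>) \<partial>M) \<le> m"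
  shows "(\<integral>\<^sup>+\<omega>. indicator B (V (past n) \<omega>) * of_nat (Z (Suc n) \<omega>) \<partial>M)
      \<le> m * (\<integral>\<^sup>+\<omega>. indicator B (V (past n) \<omega>) * of_nat (Z n \<omega> + \<psi> n (Z n \<omega>) \<omega>) \<partial>M)"
proof -
  have "(\<integral>\<^sup>+\<omega>. indicator B (V (past n) \<omega>) * (\<Sum>i\<in>{1..Z n \<omega> + \<psi> n (Z n \<omega>) \<omega>}. of_nat (\<xi> n i \<omega>)) \<partial>M)
      \<le> m * (\<integral>\<^sup>+\<omega>. indicator B (V (past n) \<omega>) * of_nat (Z n \<omega> + \<psi> n (Z n \<omega>) \<omega>) \<partial>M)"
  proof (rule nn_integral_random_sum_le[where Y="\<lambda>i \<omega>. of_nat (\<xi> n i \<omega>)"])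
    show "(\<lambda>\<omega>. Z n \<omega> + \<psi> n (Z n \<omega>) \<omega>) \<in> measurable M (count_space UNIV)"
      by (intro measurable_add_nat measurable_Z measurable_compose_countable[OF measurable_\<psi> measurable_Z])
    show "(\<lambda>\<omega>. indicator B (V (past n) \<omega>)) \<in> borel_measurable M"
      using borel_measurable_src_family[OF past_subset_src_index] B by measurable
    fix i :: nat assume "1 \<le> i"
    then show "(\<lambda>\<omega>. of_nat (\<xi> n i \<omega>)) \<in> borel_measurable M"
      using measurable_\<xi> by measurable
    show "(\<integral>\<^sup>+\<omega>. of_nat (\<xi> n i \<omega>) \<partial>M) \<le> m"
      using mean[OF \<open>1 \<le> i\<close>] .
  qed (rule nn_integral_offspring_indep[OF B])
  then show ?thesis by simp
qed

lemma past_growth_le: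
  fixes m c \<kappa> :: ennreal
  assumes B: "B \<in> sets (past_space n)"
    and offspring: "\<And>i. 1 \<le> i \<Longrightarrow> (\<integral>\<^sup>+\<omega>. of_nat (\<xi> n i \<omega>) \<partial>M) \<le> m"
    and immigration: "\<And>z. (\<integral>\<^sup>+\<omega>. of_nat (\<psi> n z \<omega>) \<partial>M) \<le> c * (\<kappa> + of_nat z)"
    and m: "1 \<le> m"
  shows "(\<integral>\<^sup>+\<omega>. indicator B (V (past n) \<omega>) * (of_nat (Z (Suc n) \<omega>) + \<kappa>) \<partial>M)
      \<le> m * (1 + c) * (\<integral>\<^sup>+\<omega>. indicator B (V (past n) \<omega>) * (of_nat (Z n \<omega>) + \<kappa>) \<partial>M)"
proof -
  let ?I = "\<lambda>\<omega>. indicator B (V (past n) \<omega>) :: ennreal"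
  have [measurable]: "?I \<in> borel_measurable M"
    using borel_measurable_src_family[OF past_subset_src_index] B by measurable
  have [measurable]: "(\<lambda>\<omega>. \<psi> n (Z n \<omega>) \<omega>) \<in> measurable M (count_space UNIV)"
    by (rule measurable_compose_countable[OF measurable_\<psi> measurable_Z])
  note [measurable] = measurable_Z
  define p where "p = (\<integral>\<^sup>+\<omega>. ?I \<omega> * of_nat (Z n \<omega>) \<partial>M)"
  define q where "q = (\<integral>\<^sup>+\<omega>. ?I \<omega> * \<kappa> \<partial>M)"
  have "(\<integral>\<^sup>+\<omega>. ?I \<omega> * (of_nat (Z (Suc n) \<omega>) + \<kappa>) \<partial>M) = (\<integral>\<^sup>+\<omega>. ?I \<omega> * of_nat (Z (Suc n) \<omega>) \<partial>M) + q"
    unfolding q_def distrib_left by (rule nn_integral_add) measurable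
  also have "\<dots> \<le> m * (p + (\<integral>\<^sup>+\<omega>. ?I \<omega> * of_nat (\<psi> n (Z n \<omega>) \<omega>) \<partial>M)) + q"
    using nn_integral_offspring_le[OF B offspring]
    by (simp add: p_def distrib_left nn_integral_add)
  also have "\<dots> \<le> m * (p + (\<integral>\<^sup>+\<omega>. ?I \<omega> * (c * (\<kappa> + of_nat (Z n \<omega>))) \<partial>M)) + q"
    using nn_integral_immigration_le[OF B immigration] by (intro add_mono mult_left_mono) auto
  also have "(\<integral>\<^sup>+\<omega>. ?I \<omega> * (c * (\<kappa> + of_nat (Z n \<omega>))) \<partial>M) = c * (q + p)"
    unfolding p_def q_def
    by (simp add: algebra_simps nn_integral_cmult nn_integral_add del: distrib_left_numeral)
  also have "m * (p + c * (q + p)) + q \<le> m * (p + c * (q + p)) + m * q"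
    using mult_right_mono[OF m, of q] by (intro add_left_mono) simp
  also have "\<dots> = m * (1 + c) * (p + q)"
    by (simp add: algebra_simps)
  also have "p + q = (\<integral>\<^sup>+\<omega>. ?I \<omega> * (of_nat (Z n \<omega>) + \<kappa>) \<partial>M)"
    unfolding p_def q_def distrib_left by (rule nn_integral_add[symmetric]) measurable
  finally show ?thesis .
qed

definition past_filtration :: "nat \<Rightarrow> 'a measure" where
  "past_filtration n = vimage_algebra (space M) (V (past n)) (past_space n)"

lemma space_past_filtration [simp]: "space (past_filtration n) = space M"
  by (simp add: past_filtration_def)

lemma sets_past_filtration:
  "sets (past_filtration n) = {V (past n) -` B \<inter> space M | B. B \<in> sets (past_space n)}"
  unfolding past_filtration_def
  using measurable_space[OF measurable_src_family[OF past_subset_src_index]]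
  by (intro sets_vimage_algebra2) auto

lemma sets_past_filtration_subset: "sets (past_filtration n) \<subseteq> sets M"
  unfolding past_filtration_def
  by (rule sets_image_in_sets[OF refl measurable_src_family[OF past_subset_src_index]])

lemma past_filtration_growth_le:
  fixes m c \<kappa> :: ennreal
  assumes A: "A \<in> sets (past_filtration n)"
    and offspring: "\<And>i. 1 \<le> i \<Longrightarrow> (\<integral>\<^sup>+\<omega>. of_nat (\<xi> n i \<omega>) \<partial>M) \<le> m"
    and immigration: "\<And>z. (\<integral>\<^sup>+\<omega>. of_nat (\<psi> n z \<omega>) \<partial>M) \<le> c * (\<kappa> + of_nat z)"
    and m: "1 \<le> m"
  shows "(\<integral>\<^sup>+\<omega>. indicator A \<omega> * (of_nat (Z (Suc n) \<omega>) + \<kappa>) \<partial>M)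
      \<le> m * (1 + c) * (\<integral>\<^sup>+\<omega>. indicator A \<omega> * (of_nat (Z n \<omega>) + \<kappa>) \<partial>M)"
proof -
  obtain B where B: "B \<in> sets (past_space n)" and A_eq: "A = V (past n) -` B \<inter> space M"
    using A by (auto simp: sets_past_filtration)
  have ind: "indicator A \<omega> = (indicator B (V (past n) \<omega>) :: ennreal)" if "\<omega> \<in> space M" for \<omega>
    using that by (simp add: A_eq indicator_def)
  have "(\<integral>\<^sup>+\<omega>. indicator A \<omega> * f \<omega> \<partial>M) = (\<integral>\<^sup>+\<omega>. indicator B (V (past n) \<omega>) * f \<omega> \<partial>M)"
    for f :: "'a \<Rightarrow> ennreal"
    by (rule nn_integral_cong) (simp add: ind)
  then show ?thesis
    using past_growth_le[OF B offspring immigration m] by simp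
qed

lemma sets_nat_filtration_subset_past_filtration:
  fixes \<gamma> t :: real
  assumes \<gamma>: "0 < \<gamma>" and t: "\<gamma> * t < real n + 1"
  shows "sets (nat_filtration M (\<lambda>t. Yproc k \<gamma> Z t) t) \<subseteq> sets (past_filtration n)"
proof -
  let ?G = "{Yproc k \<gamma> Z s -` A \<inter> space M | s A. 0 \<le> s \<and> s \<le> t \<and> A \<in> sets borel}"
  have "?G \<subseteq> sets (past_filtration n)"
  proof
    fix E assume "E \<in> ?G"
    then obtain s A where E: "E = Yproc k \<gamma> Z s -` A \<inter> space M" and s: "0 \<le> s" "s \<le> t"
      and A: "A \<in> sets borel" by blast
    define l where "l = nat \<lfloor>\<gamma> * s\<rfloor>"
    have "\<gamma> * s \<le> \<gamma> * t" using s \<gamma> by simp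
    then have "l \<le> n" using t unfolding l_def by linarith
    then have "past l \<subseteq> past n" by (rule past_mono)
    then have "(\<lambda>x. real (Zproc_src l x) / real k) \<in> borel_measurable (past_space n)"
      using measurable_Zproc_src by measurable
    then have "(\<lambda>x. real (Zproc_src l x) / real k) -` A \<inter> space (past_space n) \<in> sets (past_space n)"
      using A by measurable
    moreover have "E = V (past n) -` ((\<lambda>x. real (Zproc_src l x) / real k) -` A \<inter> space (past_space n)) \<inter> space M"
      using measurable_space[OF measurable_src_family[OF past_subset_src_index]] \<open>past l \<subseteq> past n\<close>
      by (auto simp: E Yproc_def l_def[symmetric] Zproc_eq_Zproc_src)
    ultimately show "E \<in> sets (past_filtration n)"
      unfolding sets_past_filtration by blast
  qed
  then have "sigma_sets (space M) ?G \<subseteq> sets (past_filtration n)"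
    using sets.sigma_sets_subset[of ?G "past_filtration n"] by simp
  then show ?thesis
    unfolding nat_filtration_def by (subst sets_measure_of) auto
qed

(* {S <= n} = {gamma (tau + c) < n + 1} is a countable union of events {tau <= t} with gamma t < n + 1. *)
lemma stopping_time_past_filtration:
  fixes \<gamma> c :: real and \<tau> :: "'a \<Rightarrow> real"
  assumes \<gamma>: "0 < \<gamma>" and c: "0 \<le> c"
    and \<tau>: "stopping_time (nat_filtration M (\<lambda>t. Yproc k \<gamma> Z t)) \<tau>"
  shows "stopping_time past_filtration (\<lambda>\<omega>. nat \<lfloor>\<gamma> * (\<tau> \<omega> + c)\<rfloor>)"
proof
  fix n
  define t where "t j = (real n + 1 - 1 / real (Suc j)) / \<gamma> - c" for j
  have "{\<omega>\<in>space M. \<tau> \<omega> \<le> t j} \<in> sets (past_filtration n)" for j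
  proof -
    have "\<gamma> * t j = real n + 1 - 1 / real (Suc j) - \<gamma> * c"
      using \<gamma> unfolding t_def right_diff_distrib
      by (simp only: times_divide_eq_right nonzero_mult_div_cancel_left less_irrefl)
    moreover have "0 < 1 / real (Suc j)" "0 \<le> \<gamma> * c" using \<gamma> c by auto
    ultimately have lt: "\<gamma> * t j < real n + 1" by linarith
    have "space (nat_filtration M (\<lambda>t. Yproc k \<gamma> Z t) (t j)) = space M"
      unfolding nat_filtration_def by (rule space_measure_of) auto
    then show ?thesis
      using stopping_timeD[OF \<tau>, of "t j"] sets_nat_filtration_subset_past_filtration[OF \<gamma> lt]
      by (auto simp: pred_def)
  qed
  moreover have "{\<omega>\<in>space M. nat \<lfloor>\<gamma> * (\<tau> \<omega> + c)\<rfloor> \<le> n} = (\<Union>j. {\<omega>\<in>space M. \<tau> \<omega> \<le> t j})"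
    by (auto simp: nat_floor_le_iff_ex_le[OF \<gamma>] t_def le_diff_eq)
  ultimately show "Measurable.pred (past_filtration n) (\<lambda>\<omega>. nat \<lfloor>\<gamma> * (\<tau> \<omega> + c)\<rfloor> \<le> n)"
    by (auto simp: pred_def intro!: sets.countable_UN)
qed

lemma nn_integral_initial_le:
  assumes k: "1 \<le> k" and C: "0 \<le> C"
    and initial: "(\<integral>\<^sup>+\<omega>. ennreal (real (Z0 \<omega>) / real k) \<partial>M) \<le> ennreal C"
  shows "(\<integral>\<^sup>+\<omega>. of_nat (Z0 \<omega>) + ennreal (real k) \<partial>M) \<le> ennreal (real k * (C + 1))"
proof -
  have kpos: "0 < real k" using k by simp
  have "Z 0 = Z0" by (simp add: fun_eq_iff)
  then have [measurable]: "Z0 \<in> measurable M (count_space UNIV)"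
    using measurable_Z[of 0] by simp
  have "of_nat (Z0 \<omega>) = ennreal (real k) * ennreal (real (Z0 \<omega>) / real k)" for \<omega>
    using kpos by (simp add: ennreal_mult[symmetric] ennreal_of_nat_eq_real_of_nat)
  then have "(\<integral>\<^sup>+\<omega>. of_nat (Z0 \<omega>) + ennreal (real k) \<partial>M)
      = ennreal (real k) * (\<integral>\<^sup>+\<omega>. ennreal (real (Z0 \<omega>) / real k) \<partial>M) + ennreal (real k)"
    by (simp add: nn_integral_add nn_integral_cmult emeasure_space_1)
  also have "\<dots> \<le> ennreal (real k) * ennreal C + ennreal (real k)"
    by (intro add_right_mono mult_left_mono initial) auto
  also have "\<dots> = ennreal (real k * (C + 1))"
    using C by (simp add: ennreal_mult distrib_left)
  finally show ?thesis .
qed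

lemma nn_integral_Z_stopped_le:
  fixes k N :: nat and m r C :: real and S :: "'a \<Rightarrow> nat"
  assumes k: "1 \<le> k" and m: "1 \<le> m" and r: "0 \<le> r" and C: "0 \<le> C"
    and offspring: "\<And>n i. 1 \<le> i \<Longrightarrow> (\<integral>\<^sup>+\<omega>. of_nat (\<xi> n i \<omega>) \<partial>M) \<le> ennreal m"
    and immigration: "\<And>n z. (\<integral>\<^sup>+\<omega>. of_nat (\<psi> n z \<omega>) \<partial>M) \<le> ennreal r * (ennreal (real k) + of_nat z)"
    and initial: "(\<integral>\<^sup>+\<omega>. ennreal (real (Z0 \<omega>) / real k) \<partial>M) \<le> ennreal C"
    and S: "stopping_time past_filtration S" and S_le: "\<And>\<omega>. \<omega> \<in> space M \<Longrightarrow> S \<omega> \<le> N"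
  shows "(\<integral>\<^sup>+\<omega>. of_nat (Z (S \<omega>) \<omega>) \<partial>M) \<le> ennreal ((m * (1 + r)) ^ N * (real k * (C + 1)))"
proof -
  have "1 * 1 \<le> m * (1 + r)"
    using m r by (intro mult_mono) auto
  then have a: "1 \<le> m * (1 + r)" "ennreal m * (1 + ennreal r) = ennreal (m * (1 + r))"
    using m r by (auto simp: ennreal_mult)
  have "(\<integral>\<^sup>+\<omega>. of_nat (Z (S \<omega>) \<omega>) \<partial>M) \<le> (\<integral>\<^sup>+\<omega>. of_nat (Z (S \<omega>) \<omega>) + ennreal (real k) \<partial>M)"
    by (intro nn_integral_mono) simp
  also have "\<dots> \<le> ennreal (m * (1 + r)) ^ N * (\<integral>\<^sup>+\<omega>. of_nat (Z 0 \<omega>) + ennreal (real k) \<partial>M)"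
  proof (rule nn_integral_stopped_le_power[where F=past_filtration])
    show "(\<integral>\<^sup>+\<omega>. indicator A \<omega> * (of_nat (Z (Suc n) \<omega>) + ennreal (real k)) \<partial>M)
        \<le> ennreal (m * (1 + r)) * (\<integral>\<^sup>+\<omega>. indicator A \<omega> * (of_nat (Z n \<omega>) + ennreal (real k)) \<partial>M)"
      if "A \<in> sets (past_filtration n)" for n A
      using past_filtration_growth_le[OF that offspring immigration] m unfolding a(2) by simp
  qed (use measurable_Z sets_past_filtration_subset S S_le a in auto)
  also have "\<dots> \<le> ennreal (m * (1 + r)) ^ N * ennreal (real k * (C + 1))"
    using nn_integral_initial_le[OF k C initial] by (intro mult_left_mono) auto
  also have "\<dots> = ennreal ((m * (1 + r)) ^ N * (real k * (C + 1)))"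
    using a C by (simp add: ennreal_power ennreal_mult)
  finally show ?thesis .
qed

lemma nn_integral_Yproc_stopped_le:
  fixes k :: nat and \<gamma> L K C T c :: real and \<tau> :: "'a \<Rightarrow> real"
  assumes k: "1 \<le> k" and \<gamma>: "0 < \<gamma>" and L: "0 \<le> L" and K: "0 \<le> K" and C: "0 \<le> C" and T: "0 \<le> T"
    and offspring: "\<And>n i. 1 \<le> i \<Longrightarrow> (\<integral>\<^sup>+\<omega>. of_nat (\<xi> n i \<omega>) \<partial>M) \<le> ennreal (1 + L / \<gamma>)"
    and immigration: "\<And>n z. (\<integral>\<^sup>+\<omega>. of_nat (\<psi> n z \<omega>) \<partial>M) \<le> ennreal (K / \<gamma>) * (ennreal (real k) + of_nat z)"
    and initial: "(\<integral>\<^sup>+\<omega>. ennreal (real (Z0 \<omega>) / real k) \<partial>M) \<le> ennreal C"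
    and \<tau>: "stopping_time (nat_filtration M (\<lambda>t. Yproc k \<gamma> Z t)) \<tau>"
    and c: "0 \<le> c" and \<tau>_le: "\<And>\<omega>. \<omega> \<in> space M \<Longrightarrow> \<tau> \<omega> + c \<le> T"
  shows "(\<integral>\<^sup>+\<omega>. ennreal (Yproc k \<gamma> Z (\<tau> \<omega> + c) \<omega>) \<partial>M) \<le> ennreal (exp ((L + K) * T) * (C + 1))"
proof -
  define a where "a = (1 + L / \<gamma>) * (1 + K / \<gamma>)"
  define S where "S \<omega> = nat \<lfloor>\<gamma> * (\<tau> \<omega> + c)\<rfloor>" for \<omega>
  define N where "N = nat \<lfloor>\<gamma> * T\<rfloor>"
  have kpos: "0 < real k" using k by simp
  have S: "stopping_time past_filtration S"
    unfolding S_def by (rule stopping_time_past_filtration[OF \<gamma> c \<tau>])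
  have S_le: "S \<omega> \<le> N" if "\<omega> \<in> space M" for \<omega>
    unfolding S_def N_def using \<tau>_le[OF that] \<gamma> by (intro nat_mono floor_mono) simp
  have Z_S: "(\<integral>\<^sup>+\<omega>. of_nat (Z (S \<omega>) \<omega>) \<partial>M) \<le> ennreal (a ^ N * (real k * (C + 1)))"
    unfolding a_def using \<gamma> L K
    by (intro nn_integral_Z_stopped_le[OF k _ _ C offspring immigration initial S S_le]) auto
  have [measurable]: "(\<lambda>\<omega>. Z (S \<omega>) \<omega>) \<in> measurable M (count_space UNIV)"
    using measurable_stopping_time_nat[OF S sets_past_filtration_subset space_past_filtration]
    by (rule measurable_compose_countable[OF measurable_Z])
  have "(\<integral>\<^sup>+\<omega>. ennreal (1 / real k) * of_nat (Z (S \<omega>) \<omega>) \<partial>M)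
      = ennreal (1 / real k) * (\<integral>\<^sup>+\<omega>. of_nat (Z (S \<omega>) \<omega>) \<partial>M)"
    by (rule nn_integral_cmult) measurable
  then have "(\<integral>\<^sup>+\<omega>. ennreal (Yproc k \<gamma> Z (\<tau> \<omega> + c) \<omega>) \<partial>M)
      = ennreal (1 / real k) * (\<integral>\<^sup>+\<omega>. of_nat (Z (S \<omega>) \<omega>) \<partial>M)"
    using kpos by (simp add: Yproc_def S_def ennreal_mult[symmetric] ennreal_of_nat_eq_real_of_nat)
  also have "\<dots> \<le> ennreal (1 / real k) * ennreal (a ^ N * (real k * (C + 1)))"
    by (intro mult_left_mono Z_S) auto
  also have "\<dots> = ennreal (a ^ N * (C + 1))"
    using kpos \<gamma> L K C by (simp add: a_def ennreal_mult[symmetric])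
  also have "\<dots> \<le> ennreal (exp ((L + K) * T) * (C + 1))"
    using growth_factor_power_le_exp[OF \<gamma> L K T] C
    by (intro ennreal_leI mult_right_mono) (auto simp: a_def N_def)
  finally show ?thesis .
qed

end

theorem lemma3p4:
  fixes M :: "nat \<Rightarrow> 'a measure"
    and \<xi> :: "nat \<Rightarrow> nat \<Rightarrow> nat \<Rightarrow> 'a \<Rightarrow> nat"
    and \<psi> :: "nat \<Rightarrow> nat \<Rightarrow> nat \<Rightarrow> 'a \<Rightarrow> nat"
    and Z0 :: "nat \<Rightarrow> 'a \<Rightarrow> nat"
    and g :: "nat \<Rightarrow> real \<Rightarrow> real"
    and h :: "nat \<Rightarrow> nat \<Rightarrow> real \<Rightarrow> real"
    and \<gamma> :: "nat \<Rightarrow> real"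
    and b c :: real and m :: "real measure"
    and T :: real and \<delta> :: "nat \<Rightarrow> real" and \<tau> :: "nat \<Rightarrow> 'a \<Rightarrow> real"
  assumes prob: "\<And>k. 1 \<le> k \<Longrightarrow> prob_space (M k)"
    and meas_xi: "\<And>k n i. 1 \<le> k \<Longrightarrow> \<xi> k n i \<in> measurable (M k) (count_space UNIV)"
    and meas_psi: "\<And>k n. 1 \<le> k \<Longrightarrow> (\<lambda>\<omega> i. \<psi> k n i \<omega>) \<in> measurable (M k) natfun_space"
    and meas_Z0: "\<And>k. 1 \<le> k \<Longrightarrow> Z0 k \<in> measurable (M k) (count_space UNIV)"
    and indep: "\<And>k. 1 \<le> k \<Longrightarrow>
         prob_space.indep_vars (M k) (\<lambda>_. natfun_space) (src_var (\<xi> k) (\<psi> k) (Z0 k)) src_index"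
    and pgf_xi: "\<And>k n i. 1 \<le> k \<Longrightarrow> 1 \<le> i \<Longrightarrow> has_pgf (M k) (\<xi> k n i) (g k)"
    and ident_psi: "\<And>k n. 1 \<le> k \<Longrightarrow>
         distr (M k) natfun_space (\<lambda>\<omega> i. \<psi> k n i \<omega>) = distr (M k) natfun_space (\<lambda>\<omega> i. \<psi> k 0 i \<omega>)"
    and pgf_psi: "\<And>k n i. 1 \<le> k \<Longrightarrow> has_pgf (M k) (\<psi> k n i) (h k i)"
    and gamma_pos: "\<And>k. 0 < \<gamma> k"
    and gamma_mono: "mono \<gamma>"
    and gamma_lim: "filterlim \<gamma> at_top sequentially"
    and c_nonneg: "0 \<le> c"
    and m_sets: "sets m = sets borel"
    and m_supp: "emeasure m {..0} = 0"
    and m_int: "(\<integral>\<^sup>+z. ennreal (min z (z\<^sup>2)) \<partial>m) < \<infinity>"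
    and A_lip: "\<And>a. 0 \<le> a \<Longrightarrow> \<exists>L. \<forall>k\<ge>1. \<forall>x\<in>{0..min a (real k)}. \<forall>y\<in>{0..min a (real k)}.
                  \<bar>Rk k (\<gamma> k) (g k) x - Rk k (\<gamma> k) (g k) y\<bar> \<le> L * \<bar>x - y\<bar>"
    and A_conv: "\<And>l. 0 \<le> l \<Longrightarrow> (\<lambda>k. Rk k (\<gamma> k) (g k) l) \<longlonglongrightarrow> Rlim b c m l"
    and C: "\<exists>K1>0. \<forall>k\<ge>1. \<forall>x\<ge>0. \<exists>D.
              (h k (nat \<lfloor>real k * x\<rfloor>) has_real_derivative D) (at_left 1) \<and>
              \<gamma> k / real k * D \<le> K1 * (1 + x)"
    and D: "\<exists>C. \<forall>k\<ge>1. (\<integral>\<^sup>+\<omega>. ennreal (real (Z0 k \<omega>) / real k) \<partial>M k) \<le> ennreal C"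
    and T_pos: "0 < T"
    and delta_pos: "\<And>k. 0 < \<delta> k"
    and delta_lim: "\<delta> \<longlonglongrightarrow> 0"
    and stop: "\<And>k. 1 \<le> k \<Longrightarrow> stopping_time
         (nat_filtration (M k) (\<lambda>t. Yproc k (\<gamma> k) (Zproc (\<xi> k) (\<psi> k) (Z0 k)) t)) (\<tau> k)"
    and tau_bounds: "\<And>k \<omega>. 1 \<le> k \<Longrightarrow> \<omega> \<in> space (M k) \<Longrightarrow> 0 \<le> \<tau> k \<omega> \<and> \<tau> k \<omega> + \<delta> k \<le> T"
  shows "\<exists>K3\<ge>0. \<forall>k\<ge>1.
     (\<integral>\<^sup>+\<omega>. ennreal (Yproc k (\<gamma> k) (Zproc (\<xi> k) (\<psi> k) (Z0 k)) (\<tau> k \<omega>) \<omega>) \<partial>M k) \<le> ennreal K3 \<and>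
     (\<integral>\<^sup>+\<omega>. ennreal (Yproc k (\<gamma> k) (Zproc (\<xi> k) (\<psi> k) (Z0 k)) (\<tau> k \<omega> + \<delta> k) \<omega>) \<partial>M k) \<le> ennreal K3"
(* Only independence, measurability, the pgf hypotheses, the Lipschitz part of (A), (C) and (D) are used;
   the bound does not need the limits in (A), the growth of gamma, delta_k -> 0 or identically
   distributed immigration. *)
proof -
  obtain L where L: "\<forall>k\<ge>1. \<forall>x\<in>{0..min 1 (real k)}. \<forall>y\<in>{0..min 1 (real k)}.
      \<bar>Rk k (\<gamma> k) (g k) x - Rk k (\<gamma> k) (g k) y\<bar> \<le> L * \<bar>x - y\<bar>"
    using A_lip[of 1] by auto
  have L_nonneg: "0 \<le> L"
    using L[rule_format, of 1 1 0] by (auto intro: order_trans[OF abs_ge_zero])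
  obtain K1 where K1: "0 < K1" "\<forall>k\<ge>1. \<forall>x\<ge>0. \<exists>D.
      (h k (nat \<lfloor>real k * x\<rfloor>) has_real_derivative D) (at_left 1) \<and> \<gamma> k / real k * D \<le> K1 * (1 + x)"
    using C by blast
  obtain C0 where C0: "\<forall>k\<ge>1. (\<integral>\<^sup>+\<omega>. ennreal (real (Z0 k \<omega>) / real k) \<partial>M k) \<le> ennreal (max C0 0)"
    using D by (meson ennreal_leI max.cobounded1 order_trans)
  show ?thesis
  proof (intro exI[of _ "exp ((L + K1) * T) * (max C0 0 + 1)"] conjI allI impI)
    fix k :: nat assume k: "1 \<le> k"
    interpret branching_immigration "M k" "\<xi> k" "\<psi> k" "Z0 k"
      using prob[OF k] indep[OF k] by (simp add: branching_immigration_def branching_immigration_axioms_def)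
    have offspring: "(\<integral>\<^sup>+\<omega>. of_nat (\<xi> k n i \<omega>) \<partial>M k) \<le> ennreal (1 + L / \<gamma> k)" if "1 \<le> i" for n i
      by (rule nn_integral_le_of_Rk_bound[OF prob[OF k] meas_xi[OF k] pgf_xi[OF k that] k gamma_pos])
         (use L k in blast)
    have immigration: "(\<integral>\<^sup>+\<omega>. of_nat (\<psi> k n z \<omega>) \<partial>M k) \<le> ennreal (K1 / \<gamma> k) * (ennreal (real k) + of_nat z)"
      for n z
      using K1 k by (intro nn_integral_le_of_pgf_deriv_bound[where h="h k", OF prob[OF k] measurable_\<psi> pgf_psi[OF k] k gamma_pos]) auto
    note bound = nn_integral_Yproc_stopped_le[OF k gamma_pos L_nonneg less_imp_le[OF K1(1)] _
        less_imp_le[OF T_pos] offspring immigration C0[rule_format, OF k] stop[OF k]]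
    show "(\<integral>\<^sup>+\<omega>. ennreal (Yproc k (\<gamma> k) (Zproc (\<xi> k) (\<psi> k) (Z0 k)) (\<tau> k \<omega>) \<omega>) \<partial>M k)
        \<le> ennreal (exp ((L + K1) * T) * (max C0 0 + 1))"
      using bound[of 0] tau_bounds[OF k] delta_pos[of k] by fastforce
    show "(\<integral>\<^sup>+\<omega>. ennreal (Yproc k (\<gamma> k) (Zproc (\<xi> k) (\<psi> k) (Z0 k)) (\<tau> k \<omega> + \<delta> k) \<omega>) \<partial>M k)
        \<le> ennreal (exp ((L + K1) * T) * (max C0 0 + 1))"
      using bound[of "\<delta> k"] tau_bounds[OF k] delta_pos[of k] by fastforce
  qed simp
qed

end
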